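(* Let $\kappa>0$, $u_0>0$, and let $u$ be the solution of $\frac{d}{dr}\big(u'/\sqrt{1+u'^2}\big)=\kappa u$, $u(0)=u_0$, $u'(0)=0$. Let $a>0$ and $0\le\gamma<\pi/2$ be such that $u$ is defined on $[0,a)$ and $\sin\psi(a)=\cos\gamma$, where $\sin\psi=u'/\sqrt{1+u'^2}$ (extended continuously to $r=a$). Then $$\frac{2(1-\sin\gamma)}{\kappa f(\gamma)}<u(a)-u_0<\frac{a(1-\sin\gamma)}{\cos\gamma},\qquad f(\gamma)=\frac{2\cos\gamma}{\kappa a}-\frac{a\tan\gamma}2+\frac a{2\cos^2\gamma}\Big(\frac\pi2-\gamma\Big).$$
   Context: $u$ is the profile of a $\kappa$-cylindrical capillary surface $z=u(x)$ between vertical plates $x=\pm a$ with contact angle $\gamma$. *)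

theory Defs
  imports "HOL-Analysis.Analysis"
begin

definition cap_f :: "real \<Rightarrow> real \<Rightarrow> real \<Rightarrow> real" where
  "cap_f \<kappa> a \<gamma> = 2 * cos \<gamma> / (\<kappa> * a) - a * tan \<gamma> / 2
      + a / (2 * (cos \<gamma>)\<^sup>2) * (pi / 2 - \<gamma>)"

end

theory Submission
  imports Defs
begin

text \<open>
  The equation says (sin psi)' = kappa u, so (cos psi)' = - kappa u u' and
  cos psi + kappa u^2 / 2 is a first integral; at the wall it gives
  (u(a) - u0) (u(a) + u0) = 2 (1 - sin gamma) / kappa. Both bounds come from comparison
  arguments on [0, a) in which every integral is replaced by a monotone primitive.

  Upper bound: u' is increasing and crosses t = (1 - sin gamma) / cos gamma exactly once,
  at r*. Since (u - u(r*)) (u' - t) > 0 away from r* while the integral of kappa u (u' - t),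
  i.e. of the derivative of - cos psi - t sin psi, vanishes by the choice of t,
  u(a) - u0 - t a < 0.

  Lower bound: sin psi is convex (its derivative kappa u increases) and vanishes at 0, so it
  stays below its chord r cos gamma / a. Hence u' is at most the slope of the circle of
  radius a / cos gamma, and u lies above that circular arc through the wall point. Integrating
  2 u = 2 (sin psi)' / kappa against u > u0 and this arc bounds u(a) + u0 by f(gamma).
\<close>

lemma DERIV_within_Ico_imp_DERIV:
  assumes "(f has_real_derivative d) (at r within {b..<a})" "b < r" "r < a"
  shows "(f has_real_derivative d) (at r)"
  using assms at_within_interior[of r "{b..<a}"] by simp

lemma DERIV_within_Ico_imp_continuous_on:
  assumes "\<And>r. r \<in> {b..<a} \<Longrightarrow> (f has_real_derivative f' r) (at r within {b..<a})"
  shows "continuous_on {b..<a} f"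
  using assms DERIV_continuous continuous_on_eq_continuous_within by blast

lemma DERIV_within_nonneg_imp_mono:
  assumes f: "\<And>r. r \<in> {b..<a} \<Longrightarrow> (f has_real_derivative f' r) (at r within {b..<a})"
    and "b \<le> x" "x \<le> y" "y < a" and "\<And>r. x < r \<Longrightarrow> r < y \<Longrightarrow> 0 \<le> f' r"
  shows "f x \<le> f y"
proof (rule DERIV_nonneg_imp_increasing_open[OF \<open>x \<le> y\<close>])
  show "continuous_on {x..y} f"
    using DERIV_within_Ico_imp_continuous_on[OF f] by (rule continuous_on_subset) (use assms in auto)
  show "\<exists>z. DERIV f r :> z \<and> 0 \<le> z" if "x < r" "r < y" for r
    using DERIV_within_Ico_imp_DERIV[OF f[of r]] that assms by auto
qed

lemma DERIV_within_pos_imp_strict_mono: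
  assumes f: "\<And>r. r \<in> {b..<a} \<Longrightarrow> (f has_real_derivative f' r) (at r within {b..<a})"
    and "b \<le> x" "x < y" "y < a" and "\<And>r. x < r \<Longrightarrow> r < y \<Longrightarrow> 0 < f' r"
  shows "f x < f y"
proof (rule DERIV_pos_imp_increasing_open[OF \<open>x < y\<close>])
  show "continuous_on {x..y} f"
    using DERIV_within_Ico_imp_continuous_on[OF f] by (rule continuous_on_subset) (use assms in auto)
  show "\<exists>z. DERIV f r :> z \<and> 0 < z" if "x < r" "r < y" for r
    using DERIV_within_Ico_imp_DERIV[OF f[of r]] that assms by auto
qed

lemma DERIV_within_nonneg_imp_le_left_limit:
  fixes f :: "real \<Rightarrow> real"
  assumes f: "\<And>r. r \<in> {b..<a} \<Longrightarrow> (f has_real_derivative f' r) (at r within {b..<a})"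
    and lim: "(f \<longlongrightarrow> L) (at_left a)"
    and "b \<le> x" "x < a" and "\<And>r. x < r \<Longrightarrow> r < a \<Longrightarrow> 0 \<le> f' r"
  shows "f x \<le> L"
proof (rule tendsto_lowerbound[OF lim])
  show "\<forall>\<^sub>F y in at_left a. f x \<le> f y"
    using eventually_at_left_real[OF \<open>x < a\<close>]
    by eventually_elim (rule DERIV_within_nonneg_imp_mono[OF f], use assms in auto)
qed simp

lemma DERIV_within_pos_imp_less_left_limit:
  fixes f :: "real \<Rightarrow> real"
  assumes f: "\<And>r. r \<in> {b..<a} \<Longrightarrow> (f has_real_derivative f' r) (at r within {b..<a})"
    and lim: "(f \<longlongrightarrow> L) (at_left a)"
    and "b \<le> x" "x < y" "y \<le> a"
    and "\<And>r. x < r \<Longrightarrow> r < a \<Longrightarrow> 0 \<le> f' r" and "\<And>r. x < r \<Longrightarrow> r < y \<Longrightarrow> 0 < f' r"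
  shows "f x < L"
proof -
  define m where "m = (x + y) / 2"
  have "f x < f m"
    by (rule DERIV_within_pos_imp_strict_mono[OF f]) (use assms in \<open>auto simp: m_def\<close>)
  also have "f m \<le> L"
    by (rule DERIV_within_nonneg_imp_le_left_limit[OF f lim]) (use assms in \<open>auto simp: m_def\<close>)
  finally show ?thesis .
qed

lemma mono_deriv_zero_ends_imp_nonpos:
  fixes f :: "real \<Rightarrow> real"
  assumes f: "\<And>r. r \<in> {b..<a} \<Longrightarrow> (f has_real_derivative f' r) (at r within {b..<a})"
    and mono: "mono_on {b..<a} f'" and "f b = 0" and lim: "(f \<longlongrightarrow> 0) (at_left a)"
    and x: "x \<in> {b..<a}"
  shows "f x \<le> 0"
proof (rule ccontr)
  assume pos: "\<not> f x \<le> 0"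
  obtain \<xi> where \<xi>: "b < \<xi>" "\<xi> < x" "0 < f' \<xi>"
  proof -
    have "\<not> (\<forall>r. b < r \<longrightarrow> r < x \<longrightarrow> f' r \<le> 0)"
    proof
      assume nonpos: "\<forall>r. b < r \<longrightarrow> r < x \<longrightarrow> f' r \<le> 0"
      have "- f b \<le> - f x"
        by (rule DERIV_within_nonneg_imp_mono[where f="\<lambda>r. - f r" and f'="\<lambda>r. - f' r"])
          (use f x nonpos in \<open>auto intro!: derivative_eq_intros\<close>)
      with pos \<open>f b = 0\<close> show False by simp
    qed
    then show thesis using that by (auto simp: not_le)
  qed
  have "f x \<le> 0"
  proof (rule DERIV_within_nonneg_imp_le_left_limit[OF f lim])
    show "0 \<le> f' r" if "x < r" "r < a" for r
      using \<xi> that x mono_onD[OF mono, of \<xi> r] by auto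
  qed (use x in auto)
  with pos show False by simp
qed

lemma strict_mono_sine_of_slope: "strict_mono (\<lambda>y::real. y / sqrt (1 + y\<^sup>2))"
proof (rule strict_monoI)
  fix x y :: real
  assume "x < y"
  then have "sin (arctan x) < sin (arctan y)"
    using arctan_bounded[of x] arctan_bounded[of y] by (simp add: sin_mono_less_eq arctan_less_iff)
  then show "x / sqrt (1 + x\<^sup>2) < y / sqrt (1 + y\<^sup>2)"
    by (simp add: sin_arctan)
qed

lemma sine_of_slope_of_circle:
  fixes r R :: real
  assumes "\<bar>r\<bar> < R"
  shows "(r / sqrt (R\<^sup>2 - r\<^sup>2)) / sqrt (1 + (r / sqrt (R\<^sup>2 - r\<^sup>2))\<^sup>2) = r / R"
proof -
  have pos: "0 < R\<^sup>2 - r\<^sup>2"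
    using power_strict_mono[of "\<bar>r\<bar>" R 2] assms by simp
  then have "1 + (r / sqrt (R\<^sup>2 - r\<^sup>2))\<^sup>2 = (R / sqrt (R\<^sup>2 - r\<^sup>2))\<^sup>2"
    by (simp add: power_divide field_simps)
  then show ?thesis
    using assms pos by simp
qed

lemma has_real_derivative_circle_primitive:
  fixes r R :: real
  assumes "\<bar>r\<bar> < R"
  shows "((\<lambda>x. (x * sqrt (R\<^sup>2 - x\<^sup>2) + R\<^sup>2 * arcsin (x / R)) / 2) has_real_derivative
           sqrt (R\<^sup>2 - r\<^sup>2)) (at r)"
proof -
  have pos: "0 < R\<^sup>2 - r\<^sup>2"
    using power_strict_mono[of "\<bar>r\<bar>" R 2] assms by simp
  have R: "0 < R" using assms by linarith
  have scaled: "sqrt (1 - (r / R)\<^sup>2) = sqrt (R\<^sup>2 - r\<^sup>2) / R"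
    using R by (simp add: power_divide field_simps real_sqrt_divide)
  have sqrt_sq: "sqrt (R * R - r * r) * (sqrt (R * R - r * r) * c) = (R * R - r * r) * c" for c
    using pos by (simp add: power2_eq_square flip: mult.assoc)
  show ?thesis
    using assms pos R scaled
    by (auto intro!: derivative_eq_intros simp: abs_less_iff divide_simps power2_eq_square sqrt_sq)
qed

section \<open>The first integral\<close>

locale capillary_profile =
  fixes \<kappa> u0 a :: real and u du :: "real \<Rightarrow> real"
  assumes kappa_pos: "\<kappa> > 0" and u0_pos: "u0 > 0" and a_pos: "a > 0"
    and u_deriv: "\<And>r. r \<in> {0..<a} \<Longrightarrow> (u has_real_derivative du r) (at r within {0..<a})"
    and slope_sine_deriv: "\<And>r. r \<in> {0..<a} \<Longrightarrow>
           ((\<lambda>s. du s / sqrt (1 + (du s)\<^sup>2)) has_real_derivative \<kappa> * u r) (at r within {0..<a})"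
    and u_0: "u 0 = u0" and du_0: "du 0 = 0"
begin

definition sin_psi :: "real \<Rightarrow> real" where
  "sin_psi r = du r / sqrt (1 + (du r)\<^sup>2)"

definition cos_psi :: "real \<Rightarrow> real" where
  "cos_psi r = 1 / sqrt (1 + (du r)\<^sup>2)"

lemma sin_psi_deriv: "r \<in> {0..<a} \<Longrightarrow> (sin_psi has_real_derivative \<kappa> * u r) (at r within {0..<a})"
  using slope_sine_deriv unfolding sin_psi_def[abs_def] .

lemma sin_psi_0: "sin_psi 0 = 0"
  by (simp add: sin_psi_def du_0)

lemma cos_psi_pos: "cos_psi r > 0"
  by (simp add: cos_psi_def add_pos_nonneg)

lemma cos_psi_le_1: "cos_psi r \<le> 1"
  by (simp add: cos_psi_def divide_le_eq_1 add_pos_nonneg)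

lemma cos_psi_0: "cos_psi 0 = 1"
  by (simp add: cos_psi_def du_0)

lemma du_eq: "du r = sin_psi r / cos_psi r"
  using cos_psi_pos[of r] by (simp add: sin_psi_def cos_psi_def)

lemma cos_psi_eq: "cos_psi r = sqrt (1 - (sin_psi r)\<^sup>2)"
proof -
  have "1 + (du r)\<^sup>2 > 0" by (simp add: add_pos_nonneg)
  then have "1 - (sin_psi r)\<^sup>2 = 1 / (1 + (du r)\<^sup>2)"
    by (simp add: sin_psi_def power_divide field_simps)
  then show ?thesis by (simp add: cos_psi_def real_sqrt_divide)
qed

lemma sin_psi_sq_less_1: "(sin_psi r)\<^sup>2 < 1"
  using cos_psi_pos[of r] cos_psi_eq[of r] by simp

lemma cos_psi_deriv:
  assumes "r \<in> {0..<a}"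
  shows "(cos_psi has_real_derivative - (\<kappa> * u r * du r)) (at r within {0..<a})"
proof -
  have "((\<lambda>s. sqrt (1 - (sin_psi s)\<^sup>2)) has_real_derivative
          - (sin_psi r * (\<kappa> * u r)) / sqrt (1 - (sin_psi r)\<^sup>2)) (at r within {0..<a})"
    using sin_psi_sq_less_1[of r]
    by (auto intro!: derivative_eq_intros sin_psi_deriv[OF assms] simp: field_simps)
  then show ?thesis
    using cos_psi_pos[of r] by (simp add: cos_psi_eq[abs_def, symmetric] cos_psi_eq[symmetric] du_eq mult_ac)
qed

lemma first_integral:
  assumes "r \<in> {0..<a}"
  shows "cos_psi r + \<kappa> * (u r)\<^sup>2 / 2 = 1 + \<kappa> * u0\<^sup>2 / 2"
proof -
  have "\<exists>c. \<forall>x\<in>{0..<a}. cos_psi x + \<kappa> * (u x)\<^sup>2 / 2 = c"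
  proof (rule has_field_derivative_zero_constant)
    fix x assume x: "x \<in> {0..<a}"
    show "((\<lambda>x. cos_psi x + \<kappa> * (u x)\<^sup>2 / 2) has_real_derivative 0) (at x within {0..<a})"
      using cos_psi_deriv[OF x] u_deriv[OF x] by (auto intro!: derivative_eq_intros)
  qed simp
  then obtain c where "\<forall>x\<in>{0..<a}. cos_psi x + \<kappa> * (u x)\<^sup>2 / 2 = c" by blast
  moreover have "0 \<in> {0..<a}" using a_pos by simp
  ultimately show ?thesis using assms by (metis cos_psi_0 u_0)
qed

lemma u0_sq_le:
  assumes "r \<in> {0..<a}"
  shows "u0\<^sup>2 \<le> (u r)\<^sup>2"
proof -
  have "\<kappa> * ((u r)\<^sup>2 - u0\<^sup>2) = 2 * (1 - cos_psi r)"
    using first_integral[OF assms] by (simp add: algebra_simps)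
  then have "0 \<le> \<kappa> * ((u r)\<^sup>2 - u0\<^sup>2)"
    using cos_psi_le_1[of r] by simp
  then show ?thesis
    using kappa_pos by (simp add: zero_le_mult_iff)
qed

lemma u_pos:
  assumes r: "r \<in> {0..<a}"
  shows "u r > 0"
proof (rule ccontr)
  assume "\<not> u r > 0"
  moreover have "continuous_on {0..r} u"
    using DERIV_within_Ico_imp_continuous_on[OF u_deriv] by (rule continuous_on_subset) (use r in auto)
  ultimately obtain x where "0 \<le> x" "x \<le> r" "u x = 0"
    using IVT2'[of u r 0 0] u_0 u0_pos r by auto
  with u0_sq_le[of x] u0_pos r show False by simp
qed

lemma sin_psi_strict_mono: "0 \<le> x \<Longrightarrow> x < y \<Longrightarrow> y < a \<Longrightarrow> sin_psi x < sin_psi y"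
  by (rule DERIV_within_pos_imp_strict_mono[OF sin_psi_deriv]) (use u_pos kappa_pos in auto)

lemma du_strict_mono: "0 \<le> x \<Longrightarrow> x < y \<Longrightarrow> y < a \<Longrightarrow> du x < du y"
  using sin_psi_strict_mono strict_mono_less[OF strict_mono_sine_of_slope]
  by (simp add: sin_psi_def)

lemma du_pos: "0 < r \<Longrightarrow> r < a \<Longrightarrow> 0 < du r"
  using du_strict_mono[of 0 r] du_0 by simp

lemma u_strict_mono: "0 \<le> x \<Longrightarrow> x < y \<Longrightarrow> y < a \<Longrightarrow> u x < u y"
  by (rule DERIV_within_pos_imp_strict_mono[OF u_deriv]) (use du_pos in auto)

lemma u_mono: "0 \<le> x \<Longrightarrow> x \<le> y \<Longrightarrow> y < a \<Longrightarrow> u x \<le> u y"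
  using u_strict_mono[of x y] by (cases "x = y") auto

end

locale capillary_contact = capillary_profile +
  fixes \<gamma> :: real
  assumes gamma_nonneg: "0 \<le> \<gamma>" and gamma_less: "\<gamma> < pi / 2"
    and slope_sine_tendsto: "((\<lambda>s. du s / sqrt (1 + (du s)\<^sup>2)) \<longlongrightarrow> cos \<gamma>) (at_left a)"
begin

lemma cos_gamma_pos: "0 < cos \<gamma>"
  using gamma_nonneg gamma_less by (intro cos_gt_zero_pi) auto

lemma sin_gamma_nonneg: "0 \<le> sin \<gamma>"
  using gamma_nonneg gamma_less by (intro sin_ge_zero) auto

lemma sin_gamma_less_1: "sin \<gamma> < 1"
  using sin_monotone_2pi[of \<gamma> "pi / 2"] gamma_nonneg gamma_less by simp

lemma sin_psi_tendsto: "(sin_psi \<longlongrightarrow> cos \<gamma>) (at_left a)"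
  using slope_sine_tendsto unfolding sin_psi_def[abs_def] .

lemma cos_psi_tendsto: "(cos_psi \<longlongrightarrow> sin \<gamma>) (at_left a)"
proof -
  have "(cos_psi \<longlongrightarrow> sqrt (1 - (cos \<gamma>)\<^sup>2)) (at_left a)"
    unfolding cos_psi_eq[abs_def] by (intro tendsto_intros sin_psi_tendsto)
  then show ?thesis
    using sin_gamma_nonneg by (simp flip: sin_squared_eq)
qed

definition height_at_wall :: real where
  "height_at_wall = sqrt (u0\<^sup>2 + 2 * (1 - sin \<gamma>) / \<kappa>)"

lemma u_tendsto: "(u \<longlongrightarrow> height_at_wall) (at_left a)"
proof -
  have lim: "((\<lambda>r. sqrt (u0\<^sup>2 + 2 * (1 - cos_psi r) / \<kappa>)) \<longlongrightarrow> height_at_wall) (at_left a)"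
    unfolding height_at_wall_def using kappa_pos by (intro tendsto_intros cos_psi_tendsto) auto
  have eq: "sqrt (u0\<^sup>2 + 2 * (1 - cos_psi r) / \<kappa>) = u r" if "r \<in> {0..<a}" for r
  proof (rule real_sqrt_unique)
    show "(u r)\<^sup>2 = u0\<^sup>2 + 2 * (1 - cos_psi r) / \<kappa>"
      using first_integral[OF that] kappa_pos by (simp add: field_simps)
    show "0 \<le> u r"
      using u_pos[OF that] by simp
  qed
  have "\<forall>\<^sub>F r in at_left a. sqrt (u0\<^sup>2 + 2 * (1 - cos_psi r) / \<kappa>) = u r"
    using eventually_at_left_real[OF a_pos] by eventually_elim (use eq in auto)
  then show ?thesis
    by (rule Lim_transform_eventually[OF lim])
qed

lemma height_diff_times_sum: "(height_at_wall - u0) * (height_at_wall + u0) = 2 * (1 - sin \<gamma>) / \<kappa>"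
proof -
  have "height_at_wall\<^sup>2 = u0\<^sup>2 + 2 * (1 - sin \<gamma>) / \<kappa>"
    unfolding height_at_wall_def using sin_gamma_less_1 kappa_pos by simp
  then show ?thesis
    by (simp add: algebra_simps power2_eq_square)
qed

lemma u0_le_height_at_wall: "u0 \<le> height_at_wall"
  unfolding height_at_wall_def
  using real_sqrt_le_mono[of "u0\<^sup>2" "u0\<^sup>2 + 2 * (1 - sin \<gamma>) / \<kappa>"] sin_gamma_less_1 kappa_pos u0_pos
  by simp

section \<open>Upper bound\<close>

lemma du_attains_slope:
  assumes "0 < t" and less: "t / sqrt (1 + t\<^sup>2) < cos \<gamma>"
  obtains rs where "0 < rs" "rs < a" "du rs = t"
proof -
  let ?q = "t / sqrt (1 + t\<^sup>2)"
  have "0 < ?q"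
    using \<open>0 < t\<close> by (simp add: add_pos_nonneg)
  have "\<forall>\<^sub>F r in at_left a. ?q < sin_psi r \<and> 0 < r \<and> r < a"
    using order_tendstoD(1)[OF sin_psi_tendsto less] eventually_at_left_real[OF a_pos]
    by eventually_elim auto
  then obtain r1 where r1: "?q < sin_psi r1" "0 < r1" "r1 < a"
    using eventually_happens'[OF trivial_limit_at_left_real] by blast
  have "continuous_on {0..r1} sin_psi"
    using DERIV_within_Ico_imp_continuous_on[OF sin_psi_deriv]
    by (rule continuous_on_subset) (use r1 in auto)
  then obtain rs where rs: "0 \<le> rs" "rs \<le> r1" "sin_psi rs = ?q"
    using IVT'[of sin_psi 0 ?q r1] r1 \<open>0 < ?q\<close> sin_psi_0 by auto
  have "du rs = t"
    using rs strict_mono_eq[OF strict_mono_sine_of_slope] by (simp add: sin_psi_def)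
  moreover have "rs \<noteq> 0"
    using rs \<open>0 < ?q\<close> sin_psi_0 by auto
  ultimately show thesis
    by (intro that[of rs]) (use rs r1 in auto)
qed

lemma height_diff_below_slope_line:
  assumes rs: "0 < rs" "rs < a"
  shows "height_at_wall - u0 - du rs * a < (1 - sin \<gamma> - du rs * cos \<gamma>) / (\<kappa> * u rs)"
proof -
  \<comment> \<open>Both factors of the derivative of G change sign at rs, so G increases from G 0 = 0.\<close>
  define t where "t = du rs"
  define us where "us = u rs"
  have us: "0 < us"
    unfolding us_def using u_pos rs by simp
  define G where "G r = t * r - (u r - u0) - (cos_psi r + t * sin_psi r - 1) / (\<kappa> * us)" for r
  have G_deriv: "(G has_real_derivative (du r - t) * (u r / us - 1)) (at r within {0..<a})"
    if "r \<in> {0..<a}" for r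
    unfolding G_def using us kappa_pos
    by (auto intro!: derivative_eq_intros u_deriv[OF that] cos_psi_deriv[OF that]
        sin_psi_deriv[OF that] simp: field_simps)
  have G_tendsto: "(G \<longlongrightarrow> t * a - (height_at_wall - u0) - (sin \<gamma> + t * cos \<gamma> - 1) / (\<kappa> * us))
      (at_left a)"
    unfolding G_def using kappa_pos us
    by (intro tendsto_intros u_tendsto cos_psi_tendsto sin_psi_tendsto) auto
  have G_deriv_pos: "0 < (du r - t) * (u r / us - 1)" if "0 < r" "r < rs" for r
    using du_strict_mono[of r rs] u_strict_mono[of r rs] that rs us
    by (simp add: t_def us_def mult_neg_neg)
  have G_deriv_nonneg: "0 \<le> (du r - t) * (u r / us - 1)" if "0 < r" "r < a" for r
  proof (cases "r < rs")
    case True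
    then show ?thesis using G_deriv_pos that by (simp add: less_imp_le)
  next
    case False
    then show ?thesis
      using du_strict_mono[of rs r] u_mono[of rs r] that rs us
      by (cases "r = rs") (auto simp: t_def us_def)
  qed
  have "G 0 < t * a - (height_at_wall - u0) - (sin \<gamma> + t * cos \<gamma> - 1) / (\<kappa> * us)"
    by (rule DERIV_within_pos_imp_less_left_limit[OF G_deriv G_tendsto, where y = rs])
      (use rs G_deriv_pos G_deriv_nonneg in auto)
  moreover have "G 0 = 0"
    unfolding G_def by (simp add: u_0 cos_psi_0 sin_psi_0)
  ultimately show ?thesis
    using us kappa_pos by (simp add: t_def us_def field_simps)
qed

lemma height_upper_bound: "height_at_wall - u0 < a * (1 - sin \<gamma>) / cos \<gamma>"
proof -
  \<comment> \<open>The slope for which the right-hand side of the previous lemma vanishes.\<close>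
  define t where "t = (1 - sin \<gamma>) / cos \<gamma>"
  have "0 < t"
    unfolding t_def using cos_gamma_pos sin_gamma_less_1 by simp
  have "t * sin \<gamma> < cos \<gamma>"
  proof -
    have "(1 - sin \<gamma>) * sin \<gamma> < (cos \<gamma>)\<^sup>2"
      using sin_gamma_less_1 by (simp add: cos_squared_eq algebra_simps power2_eq_square)
    then show ?thesis
      unfolding t_def using cos_gamma_pos by (simp add: divide_less_eq power2_eq_square)
  qed
  then have "(t * sin \<gamma>)\<^sup>2 < (cos \<gamma>)\<^sup>2"
    using \<open>0 < t\<close> sin_gamma_nonneg by (intro power_strict_mono) auto
  then have "t\<^sup>2 < ((cos \<gamma>) * sqrt (1 + t\<^sup>2))\<^sup>2"
    by (simp add: power_mult_distrib sin_squared_eq algebra_simps add_pos_nonneg)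
  then have "t < cos \<gamma> * sqrt (1 + t\<^sup>2)"
    using cos_gamma_pos power2_less_imp_less by fastforce
  then have "t / sqrt (1 + t\<^sup>2) < cos \<gamma>"
    by (simp add: divide_less_eq add_pos_nonneg mult.commute)
  then obtain rs where rs: "0 < rs" "rs < a" "du rs = t"
    using du_attains_slope \<open>0 < t\<close> by blast
  have "t * cos \<gamma> = 1 - sin \<gamma>"
    unfolding t_def using cos_gamma_pos by simp
  then have "height_at_wall - u0 < t * a"
    using height_diff_below_slope_line[OF rs(1,2)] by (simp add: rs(3))
  then show ?thesis
    by (simp add: t_def mult.commute)
qed

section \<open>Lower bound\<close>

lemma sin_psi_le_chord:
  assumes "r \<in> {0..<a}"
  shows "sin_psi r \<le> r * cos \<gamma> / a"
proof -
  have "sin_psi r - r * cos \<gamma> / a \<le> 0"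
  proof (rule mono_deriv_zero_ends_imp_nonpos
      [where f = "\<lambda>r. sin_psi r - r * cos \<gamma> / a" and f' = "\<lambda>r. \<kappa> * u r - cos \<gamma> / a"])
    show "((\<lambda>r. sin_psi r - r * cos \<gamma> / a) has_real_derivative \<kappa> * u r - cos \<gamma> / a)
        (at r within {0..<a})" if "r \<in> {0..<a}" for r
      using a_pos by (auto intro!: derivative_eq_intros sin_psi_deriv[OF that])
    show "mono_on {0..<a} (\<lambda>r. \<kappa> * u r - cos \<gamma> / a)"
      using u_mono kappa_pos by (auto intro!: mono_onI)
    have "((\<lambda>r. sin_psi r - r * cos \<gamma> / a) \<longlongrightarrow> cos \<gamma> - a * cos \<gamma> / a) (at_left a)"
      using a_pos by (intro tendsto_intros sin_psi_tendsto) auto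
    then show "((\<lambda>r. sin_psi r - r * cos \<gamma> / a) \<longlongrightarrow> 0) (at_left a)"
      using a_pos by simp
  qed (use assms sin_psi_0 in auto)
  then show ?thesis by simp
qed

lemma circle_height_at_wall: "sqrt ((a / cos \<gamma>)\<^sup>2 - a\<^sup>2) = a * tan \<gamma>"
proof (rule real_sqrt_unique)
  show "(a * tan \<gamma>)\<^sup>2 = (a / cos \<gamma>)\<^sup>2 - a\<^sup>2"
    unfolding tan_def using cos_gamma_pos by (simp add: power_divide field_simps sin_squared_eq)
  show "0 \<le> a * tan \<gamma>"
    unfolding tan_def using a_pos sin_gamma_nonneg cos_gamma_pos by simp
qed

lemma u_above_circle:
  assumes r: "r \<in> {0..<a}"
  shows "height_at_wall + a * tan \<gamma> \<le> u r + sqrt ((a / cos \<gamma>)\<^sup>2 - r\<^sup>2)"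
proof -
  define R where "R = a / cos \<gamma>"
  have "a \<le> R"
    unfolding R_def using a_pos cos_gamma_pos by (simp add: le_divide_eq)
  have pos: "0 < R\<^sup>2 - s\<^sup>2" if "s \<in> {0..<a}" for s
    using power_strict_mono[of s R 2] that \<open>a \<le> R\<close> by simp
  have "- (u r + sqrt (R\<^sup>2 - r\<^sup>2)) \<le> - (height_at_wall + sqrt (R\<^sup>2 - a\<^sup>2))"
  proof (rule DERIV_within_nonneg_imp_le_left_limit
      [where f = "\<lambda>s. - (u s + sqrt (R\<^sup>2 - s\<^sup>2))" and f' = "\<lambda>s. s / sqrt (R\<^sup>2 - s\<^sup>2) - du s"])
    show "((\<lambda>s. - (u s + sqrt (R\<^sup>2 - s\<^sup>2))) has_real_derivative s / sqrt (R\<^sup>2 - s\<^sup>2) - du s)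
        (at s within {0..<a})" if "s \<in> {0..<a}" for s
      using pos[OF that]
      by (auto intro!: derivative_eq_intros u_deriv[OF that] simp: field_simps)
    show "((\<lambda>s. - (u s + sqrt (R\<^sup>2 - s\<^sup>2))) \<longlongrightarrow> - (height_at_wall + sqrt (R\<^sup>2 - a\<^sup>2))) (at_left a)"
      by (intro tendsto_intros u_tendsto)
    show "0 \<le> s / sqrt (R\<^sup>2 - s\<^sup>2) - du s" if "r < s" "s < a" for s
    proof -
      have "\<bar>s\<bar> < R" using that r \<open>a \<le> R\<close> by auto
      have "du s / sqrt (1 + (du s)\<^sup>2) \<le> s / R"
        using sin_psi_le_chord[of s] that r by (simp add: sin_psi_def R_def)
      then have "du s \<le> s / sqrt (R\<^sup>2 - s\<^sup>2)"
        using strict_mono_less_eq[OF strict_mono_sine_of_slope]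
          sine_of_slope_of_circle[OF \<open>\<bar>s\<bar> < R\<close>] by metis
      then show ?thesis by simp
    qed
  qed (use r in auto)
  then show ?thesis
    using circle_height_at_wall by (simp add: R_def)
qed

lemma arcsin_cos_gamma: "arcsin (cos \<gamma>) = pi / 2 - \<gamma>"
proof -
  have "arcsin (cos \<gamma>) = arcsin (sin (pi / 2 - \<gamma>))"
    by (simp add: sin_cos_eq)
  also have "\<dots> = pi / 2 - \<gamma>"
    using gamma_nonneg gamma_less by (intro arcsin_sin) auto
  finally show ?thesis .
qed

lemma height_sum_arc_bound:
  "(height_at_wall + a * tan \<gamma> + u0) * a
     < 2 * cos \<gamma> / \<kappa> + (a * (a * tan \<gamma>) + (a / cos \<gamma>)\<^sup>2 * (pi / 2 - \<gamma>)) / 2"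
proof -
  \<comment> \<open>2 sin_psi s / kappa and P s are the integrals over [0, s] of 2 u and of sqrt (R^2 - r^2).\<close>
  define R where "R = a / cos \<gamma>"
  define c where "c = height_at_wall + a * tan \<gamma> + u0"
  define P where "P s = (s * sqrt (R\<^sup>2 - s\<^sup>2) + R\<^sup>2 * arcsin (s / R)) / 2" for s
  define K where "K s = 2 * sin_psi s / \<kappa> - c * s + P s" for s
  have "a \<le> R" "0 < R"
    unfolding R_def using a_pos cos_gamma_pos by (simp_all add: le_divide_eq)
  have K_deriv: "(K has_real_derivative 2 * u s - c + sqrt (R\<^sup>2 - s\<^sup>2)) (at s within {0..<a})"
    if "s \<in> {0..<a}" for s
  proof -
    have "(P has_real_derivative sqrt (R\<^sup>2 - s\<^sup>2)) (at s within {0..<a})"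
      unfolding P_def[abs_def] using that \<open>a \<le> R\<close>
      by (intro has_field_derivative_at_within[OF has_real_derivative_circle_primitive]) auto
    then show ?thesis
      unfolding K_def[abs_def] using kappa_pos
      by (auto intro!: derivative_eq_intros sin_psi_deriv[OF that])
  qed
  have "continuous_on {0..a} P"
    unfolding P_def using \<open>a \<le> R\<close> \<open>0 < R\<close>
    by (intro continuous_intros) (auto simp: divide_le_eq le_divide_eq)
  then have K_tendsto: "(K \<longlongrightarrow> 2 * cos \<gamma> / \<kappa> - c * a + P a) (at_left a)"
    unfolding K_def[abs_def] using a_pos kappa_pos
    by (intro tendsto_intros sin_psi_tendsto continuous_on_Icc_at_leftD) auto
  have K_deriv_pos: "0 < 2 * u s - c + sqrt (R\<^sup>2 - s\<^sup>2)" if "0 < s" "s < a" for s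
    using u_strict_mono[of 0 s] u_above_circle[of s] that by (simp add: u_0 c_def R_def)
  have "K 0 < 2 * cos \<gamma> / \<kappa> - c * a + P a"
    by (rule DERIV_within_pos_imp_less_left_limit[OF K_deriv K_tendsto, where y = a])
      (use a_pos K_deriv_pos in \<open>auto intro: less_imp_le\<close>)
  moreover have "K 0 = 0"
    unfolding K_def P_def by (simp add: sin_psi_0)
  moreover have "P a = (a * (a * tan \<gamma>) + R\<^sup>2 * (pi / 2 - \<gamma>)) / 2"
    unfolding P_def circle_height_at_wall[folded R_def]
    using a_pos cos_gamma_pos by (simp add: R_def arcsin_cos_gamma)
  ultimately show ?thesis
    by (simp add: c_def R_def)
qed

lemma height_sum_less_cap_f: "height_at_wall + u0 < cap_f \<kappa> a \<gamma>"
proof -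
  have "cap_f \<kappa> a \<gamma> * a
      = 2 * cos \<gamma> / \<kappa> + (a * (a * tan \<gamma>) + (a / cos \<gamma>)\<^sup>2 * (pi / 2 - \<gamma>)) / 2 - a * tan \<gamma> * a"
    unfolding cap_f_def using a_pos cos_gamma_pos kappa_pos
    by (simp add: tan_def field_simps power2_eq_square)
  then have "(height_at_wall + u0) * a < cap_f \<kappa> a \<gamma> * a"
    using height_sum_arc_bound by (simp add: algebra_simps)
  then show ?thesis
    using a_pos by simp
qed

lemma height_lower_bound: "2 * (1 - sin \<gamma>) / (\<kappa> * cap_f \<kappa> a \<gamma>) < height_at_wall - u0"
proof -
  have sum_pos: "0 < height_at_wall + u0"
    using u0_le_height_at_wall u0_pos by simp
  have "2 * (1 - sin \<gamma>) / (\<kappa> * cap_f \<kappa> a \<gamma>) < 2 * (1 - sin \<gamma>) / (\<kappa> * (height_at_wall + u0))"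
    by (rule divide_strict_left_mono)
      (use height_sum_less_cap_f sum_pos kappa_pos sin_gamma_less_1 in auto)
  also have "\<dots> = height_at_wall - u0"
  proof -
    have "2 * (1 - sin \<gamma>) = \<kappa> * (height_at_wall + u0) * (height_at_wall - u0)"
      using height_diff_times_sum kappa_pos by (simp add: field_simps)
    then show ?thesis
      using sum_pos kappa_pos by simp
  qed
  finally show ?thesis .
qed

end

theorem mainTheorem12:
  fixes u du :: "real \<Rightarrow> real" and \<kappa> u0 a \<gamma> :: real
  assumes "\<kappa> > 0" and "u0 > 0" and "a > 0"
    and "0 \<le> \<gamma>" and "\<gamma> < pi / 2"
    and "\<And>r. r \<in> {0..<a} \<Longrightarrow> (u has_real_derivative du r) (at r within {0..<a})"
    and "\<And>r. r \<in> {0..<a} \<Longrightarrow>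
           ((\<lambda>s. du s / sqrt (1 + (du s)\<^sup>2)) has_real_derivative \<kappa> * u r) (at r within {0..<a})"
    and "u 0 = u0" and "du 0 = 0"
    and "((\<lambda>s. du s / sqrt (1 + (du s)\<^sup>2)) \<longlongrightarrow> cos \<gamma>) (at_left a)"
  shows "\<exists>ua. (u \<longlongrightarrow> ua) (at_left a) \<and>
           2 * (1 - sin \<gamma>) / (\<kappa> * cap_f \<kappa> a \<gamma>) < ua - u0 \<and>
           ua - u0 < a * (1 - sin \<gamma>) / cos \<gamma>"
proof -
  interpret capillary_contact \<kappa> u0 a u du \<gamma>
    using assms by unfold_locales auto
  show ?thesis
    using u_tendsto height_lower_bound height_upper_bound by blast
qed

end
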